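(* Let $V$ be a finite-dimensional super vector space over a field of characteristic $0$, and let $L\subseteq\mathcal{E}=\mathfrak{gl}(V)\oplus V$ be a graded subspace. Then $L=L^\perp$ if and only if there exist a graded subspace $W\subseteq V$ and an even linear map $\pi:V\to\mathfrak{gl}(V)$ which is super skew-symmetric, i.e. $\pi(x)(y)=-(-1)^{|x||y|}\pi(y)(x)$ for all homogeneous $x,y\in V$, such that $$L=\{X+\pi(x)+x:\ X\in W^0,\ x\in W\},\qquad W^0=\{X\in\mathfrak{gl}(V): X(w)=0\ \forall w\in W\}.$$ In this situation $L\cap\mathfrak{gl}(V)=W^0$ and $W=D^0:=\{x\in V: X(x)=0\ \forall X\in D\}$ where $D=L\cap\mathfrak{gl}(V)$.
   Context: $\mathfrak{gl}(V)$: linear endomorphisms of $V$ with natural $\mathbb{Z}_2$-grading and supercommutator $[A,B]=AB-(-1)^{|A||B|}BA$. $\mathcal{E}=\mathfrak{gl}(V)\oplus V$ graded by $\mathcal{E}_\alpha=\mathfrak{gl}(V)_\alpha\oplus V_\alpha$, homogeneous elements $A+x$ with $|A|=|x|$. $V$-valued pairing: $\langle A+x,B+y\rangle=\tfrac12(Ay+(-1)^{|x||y|}Bx)$, extended bilinearly. For a subspace $F\subseteq\mathcal{E}$, $F^\perp=\{e\in\mathcal{E}:\langle e,f\rangle=0\ \forall f\in F\}$; $F$ is called maximal isotropic if $F=F^\perp$. *)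

theory Defs
  imports Complex_Main
begin

text \<open>Parity is encoded as bool: False = even (0), True = odd (1).\<close>

definition super_vs :: "('k::field \<Rightarrow> 'v::ab_group_add \<Rightarrow> 'v) \<Rightarrow> 'v set \<Rightarrow> 'v set \<Rightarrow> bool" where
  "super_vs scale V0 V1 \<longleftrightarrow> vector_space scale \<and> Modules.module.subspace scale V0 \<and> Modules.module.subspace scale V1
     \<and> V0 \<inter> V1 = {0} \<and> (\<forall>v. \<exists>a\<in>V0. \<exists>b\<in>V1. v = a + b)"

definition fin_dim :: "('k::field \<Rightarrow> 'v::ab_group_add \<Rightarrow> 'v) \<Rightarrow> bool" where
  "fin_dim scale \<longleftrightarrow> (\<exists>B. finite B \<and> Modules.module.span scale B = UNIV)"

definition Vdeg :: "'v set \<Rightarrow> 'v set \<Rightarrow> bool \<Rightarrow> 'v set" where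
  "Vdeg V0 V1 \<alpha> = (if \<alpha> then V1 else V0)"

definition vcomp :: "'v set \<Rightarrow> 'v set \<Rightarrow> bool \<Rightarrow> 'v \<Rightarrow> 'v::ab_group_add" where
  "vcomp V0 V1 \<alpha> v = (THE a. a \<in> Vdeg V0 V1 \<alpha> \<and> v - a \<in> Vdeg V0 V1 (\<not> \<alpha>))"

definition ssign :: "bool \<Rightarrow> bool \<Rightarrow> 'k::field" where
  "ssign \<alpha> \<beta> = (if \<alpha> \<and> \<beta> then -1 else 1)"

definition glV :: "('k::field \<Rightarrow> 'v::ab_group_add \<Rightarrow> 'v) \<Rightarrow> ('v \<Rightarrow> 'v) set" where
  "glV scale = {f. Vector_Spaces.linear scale scale f}"

definition gl_deg :: "('k::field \<Rightarrow> 'v::ab_group_add \<Rightarrow> 'v) \<Rightarrow> 'v set \<Rightarrow> 'v set \<Rightarrow> bool \<Rightarrow> ('v \<Rightarrow> 'v) set" where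
  "gl_deg scale V0 V1 \<alpha> = {f \<in> glV scale. \<forall>\<beta>. \<forall>x\<in>Vdeg V0 V1 \<beta>. f x \<in> Vdeg V0 V1 (\<alpha> \<noteq> \<beta>)}"

definition gcomp :: "'v set \<Rightarrow> 'v set \<Rightarrow> bool \<Rightarrow> ('v \<Rightarrow> 'v) \<Rightarrow> ('v::ab_group_add \<Rightarrow> 'v)" where
  "gcomp V0 V1 \<alpha> A = (\<lambda>v. \<Sum>\<beta>\<in>UNIV. vcomp V0 V1 (\<alpha> \<noteq> \<beta>) (A (vcomp V0 V1 \<beta> v)))"

text \<open>E = gl(V) (+) V, represented as pairs (A, x) standing for A + x.\<close>
definition Espace :: "('k::field \<Rightarrow> 'v::ab_group_add \<Rightarrow> 'v) \<Rightarrow> (('v \<Rightarrow> 'v) \<times> 'v) set" where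
  "Espace scale = glV scale \<times> UNIV"

definition Edeg :: "('k::field \<Rightarrow> 'v::ab_group_add \<Rightarrow> 'v) \<Rightarrow> 'v set \<Rightarrow> 'v set \<Rightarrow> bool \<Rightarrow> (('v \<Rightarrow> 'v) \<times> 'v) set" where
  "Edeg scale V0 V1 \<alpha> = gl_deg scale V0 V1 \<alpha> \<times> Vdeg V0 V1 \<alpha>"

definition Ecomp :: "'v set \<Rightarrow> 'v set \<Rightarrow> bool \<Rightarrow> ('v \<Rightarrow> 'v) \<times> 'v \<Rightarrow> ('v \<Rightarrow> 'v) \<times> ('v::ab_group_add)" where
  "Ecomp V0 V1 \<alpha> e = (gcomp V0 V1 \<alpha> (fst e), vcomp V0 V1 \<alpha> (snd e))"

definition Escale :: "('k \<Rightarrow> 'v \<Rightarrow> 'v) \<Rightarrow> 'k \<Rightarrow> ('v \<Rightarrow> 'v) \<times> 'v \<Rightarrow> ('v \<Rightarrow> 'v) \<times> 'v" where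
  "Escale scale c e = ((\<lambda>v. scale c (fst e v)), scale c (snd e))"

definition graded_subspace_V :: "('k::field \<Rightarrow> 'v::ab_group_add \<Rightarrow> 'v) \<Rightarrow> 'v set \<Rightarrow> 'v set \<Rightarrow> 'v set \<Rightarrow> bool" where
  "graded_subspace_V scale V0 V1 W \<longleftrightarrow> Modules.module.subspace scale W \<and> (\<forall>w\<in>W. \<forall>\<alpha>. vcomp V0 V1 \<alpha> w \<in> W)"

definition graded_subspace_E :: "('k::field \<Rightarrow> 'v::ab_group_add \<Rightarrow> 'v) \<Rightarrow> 'v set \<Rightarrow> 'v set \<Rightarrow> (('v \<Rightarrow> 'v) \<times> 'v) set \<Rightarrow> bool" where
  "graded_subspace_E scale V0 V1 L \<longleftrightarrow> L \<subseteq> Espace scale \<and> ((\<lambda>v. 0), 0) \<in> L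
     \<and> (\<forall>e\<in>L. \<forall>f\<in>L. ((\<lambda>v. fst e v + fst f v), snd e + snd f) \<in> L)
     \<and> (\<forall>c. \<forall>e\<in>L. Escale scale c e \<in> L)
     \<and> (\<forall>e\<in>L. \<forall>\<alpha>. Ecomp V0 V1 \<alpha> e \<in> L)"

text \<open>The V-valued pairing: on homogeneous elements A+x, B+y it is
  1/2 (A y + (-1)^(|x||y|) B x); extended bilinearly via homogeneous components.\<close>
definition Epair :: "('k::field_char_0 \<Rightarrow> 'v::ab_group_add \<Rightarrow> 'v) \<Rightarrow> 'v set \<Rightarrow> 'v set \<Rightarrow>
    ('v \<Rightarrow> 'v) \<times> 'v \<Rightarrow> ('v \<Rightarrow> 'v) \<times> 'v \<Rightarrow> 'v" where
  "Epair scale V0 V1 e f = scale (1/2)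
     (\<Sum>\<alpha>\<in>UNIV. \<Sum>\<beta>\<in>UNIV.
        fst (Ecomp V0 V1 \<alpha> e) (snd (Ecomp V0 V1 \<beta> f))
        + scale (ssign \<alpha> \<beta>) (fst (Ecomp V0 V1 \<beta> f) (snd (Ecomp V0 V1 \<alpha> e))))"

definition Eperp :: "('k::field_char_0 \<Rightarrow> 'v::ab_group_add \<Rightarrow> 'v) \<Rightarrow> 'v set \<Rightarrow> 'v set \<Rightarrow>
    (('v \<Rightarrow> 'v) \<times> 'v) set \<Rightarrow> (('v \<Rightarrow> 'v) \<times> 'v) set" where
  "Eperp scale V0 V1 F = {e \<in> Espace scale. \<forall>f\<in>F. Epair scale V0 V1 e f = 0}"

definition ann_gl :: "('k::field \<Rightarrow> 'v::ab_group_add \<Rightarrow> 'v) \<Rightarrow> 'v set \<Rightarrow> ('v \<Rightarrow> 'v) set" where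
  "ann_gl scale W = {X \<in> glV scale. \<forall>w\<in>W. X w = 0}"

definition ann_V :: "('v \<Rightarrow> 'v) set \<Rightarrow> 'v::zero set" where
  "ann_V D = {x. \<forall>X\<in>D. X x = 0}"

definition even_skew_map :: "('k::field \<Rightarrow> 'v::ab_group_add \<Rightarrow> 'v) \<Rightarrow> 'v set \<Rightarrow> 'v set \<Rightarrow> ('v \<Rightarrow> 'v \<Rightarrow> 'v) \<Rightarrow> bool" where
  "even_skew_map scale V0 V1 \<pi> \<longleftrightarrow>
     (\<forall>x. \<pi> x \<in> glV scale)
   \<and> (\<forall>c x y. \<pi> (scale c x + y) = (\<lambda>v. scale c (\<pi> x v) + \<pi> y v))
   \<and> (\<forall>\<alpha>. \<forall>x\<in>Vdeg V0 V1 \<alpha>. \<pi> x \<in> gl_deg scale V0 V1 \<alpha>)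
   \<and> (\<forall>\<alpha> \<beta>. \<forall>x\<in>Vdeg V0 V1 \<alpha>. \<forall>y\<in>Vdeg V0 V1 \<beta>. \<pi> x y = - scale (ssign \<alpha> \<beta>) (\<pi> y x))"

end

theory Submission
  imports Defs
begin

text \<open>
  If \<open>L = L\<^sup>\<perp>\<close>, let \<open>W = snd ` L\<close>. Pairing \<open>(B, 0) \<in> L\<close> with \<open>(C, u) \<in> L\<close> gives \<open>B u = 0\<close>,
  so elements of \<open>L\<close> with the same second component have first components agreeing on \<open>W\<close>.
  Choosing an even projection \<open>p\<close> onto \<open>W\<close> and elements \<open>(B\<^sub>w, w) \<in> L\<close>, the map
  \<open>\<pi> x = B\<^sub>p\<^sub>x \<circ> p\<close> is linear and even, isotropy of \<open>L\<close> makes it super skew-symmetric, and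
  maximality of \<open>L\<close> shows that \<open>L\<close> is the graph \<open>{X + \<pi> x + x | X \<in> W\<^sup>0, x \<in> W}\<close>.
  Conversely such a graph is isotropic by skew-symmetry of \<open>\<pi>\<close>, and an element \<open>A + x\<close> of its
  orthogonal has \<open>x \<in> (W\<^sup>0)\<^sup>0 = W\<close> (pair with \<open>W\<^sup>0\<close>) and \<open>A = \<pi> x\<close> on \<open>W\<close> (pair with \<open>\<pi> w + w\<close>).
\<close>

locale super_vector_space = vector_space scale
  for scale :: "'k::field_char_0 \<Rightarrow> 'v::ab_group_add \<Rightarrow> 'v" +
  fixes V0 V1 :: "'v set"
  assumes subspace_V0: "subspace V0" and subspace_V1: "subspace V1"
    and V0_inter_V1: "V0 \<inter> V1 = {0}"
    and V0_plus_V1: "\<forall>v. \<exists>a\<in>V0. \<exists>b\<in>V1. v = a + b"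
begin

sublocale endo: vector_space_pair scale scale ..

abbreviation "lin f \<equiv> Vector_Spaces.linear scale scale f"
abbreviation "Vd \<equiv> Vdeg V0 V1"
abbreviation "vc \<equiv> vcomp V0 V1"
abbreviation "gc \<equiv> gcomp V0 V1"
abbreviation "gl \<equiv> gl_deg scale V0 V1"
abbreviation "pairing \<equiv> Epair scale V0 V1"
abbreviation "perp \<equiv> Eperp scale V0 V1"

lemma linI:
  assumes "\<And>x y. f (x + y) = f x + f y" and "\<And>c x. f (scale c x) = scale c (f x)"
  shows "lin f"
  using assms vector_space_axioms unfolding Vector_Spaces.linear_iff by auto

lemma lin_comp: "lin f \<Longrightarrow> lin g \<Longrightarrow> lin (\<lambda>v. f (g v))"
  using Vector_Spaces.linear_compose[of scale scale g scale f] by (simp add: comp_def)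

lemma subspace_Vd: "subspace (Vd a)"
  using subspace_V0 subspace_V1 by (simp add: Vdeg_def)

lemma Vd_zero [simp]: "0 \<in> Vd a"
  using subspace_Vd subspace_0 by blast

lemma Vd_add: "x \<in> Vd a \<Longrightarrow> y \<in> Vd a \<Longrightarrow> x + y \<in> Vd a"
  using subspace_Vd subspace_add by blast

lemma Vd_scale: "x \<in> Vd a \<Longrightarrow> scale c x \<in> Vd a"
  using subspace_Vd subspace_scale by blast

lemma Vd_diff: "x \<in> Vd a \<Longrightarrow> y \<in> Vd a \<Longrightarrow> x - y \<in> Vd a"
  using subspace_Vd subspace_diff by blast

lemma Vd_inter_eq_zero: "x \<in> Vd a \<Longrightarrow> x \<in> Vd (\<not> a) \<Longrightarrow> x = 0"
  using V0_inter_V1 by (cases a) (auto simp: Vdeg_def)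

lemma Vd_add_eq_zero_iff:
  assumes "x \<in> Vd a" and "y \<in> Vd (\<not> a)"
  shows "x + y = 0 \<longleftrightarrow> x = 0 \<and> y = 0"
proof
  assume "x + y = 0"
  then have "x = - y" by (simp add: eq_neg_iff_add_eq_0)
  then have "x \<in> Vd (\<not> a)" using assms(2) subspace_Vd subspace_neg by auto
  then have "x = 0" by (rule Vd_inter_eq_zero[OF assms(1)])
  then show "x = 0 \<and> y = 0" using \<open>x = - y\<close> by simp
qed simp

lemma vc_ex1: "\<exists>!c. c \<in> Vd a \<and> v - c \<in> Vd (\<not> a)"
proof (rule ex_ex1I)
  obtain p q where "p \<in> V0" "q \<in> V1" "v = p + q" using V0_plus_V1 by blast
  then show "\<exists>c. c \<in> Vd a \<and> v - c \<in> Vd (\<not> a)"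
    by (cases a) (auto simp: Vdeg_def intro: exI[of _ p] exI[of _ q])
next
  fix c d assume "c \<in> Vd a \<and> v - c \<in> Vd (\<not> a)" "d \<in> Vd a \<and> v - d \<in> Vd (\<not> a)"
  then have "c - d \<in> Vd a" "(v - d) - (v - c) \<in> Vd (\<not> a)" using Vd_diff by blast+
  then have "c - d \<in> Vd a" "c - d \<in> Vd (\<not> a)" by simp_all
  then have "c - d = 0" by (rule Vd_inter_eq_zero)
  then show "c = d" by simp
qed

lemma vc_unique: "c \<in> Vd a \<Longrightarrow> v - c \<in> Vd (\<not> a) \<Longrightarrow> vc a v = c"
  using theI'[OF vc_ex1] vc_ex1 unfolding vcomp_def by blast

lemma vc_in: "vc a v \<in> Vd a"
  and vc_diff_in: "v - vc a v \<in> Vd (\<not> a)"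
  using theI'[OF vc_ex1] unfolding vcomp_def by blast+

lemma vc_hom: "v \<in> Vd b \<Longrightarrow> vc a v = (if a = b then v else 0)"
  by (cases "a = b") (auto intro!: vc_unique)

lemma vc_same: "v \<in> Vd a \<Longrightarrow> vc a v = v"
  and vc_other: "v \<in> Vd (\<not> a) \<Longrightarrow> vc a v = 0"
  by (simp_all add: vc_hom)

lemma vc_sum: "vc False v + vc True v = v"
proof -
  have "vc True v = v - vc False v"
    by (rule vc_unique) (use vc_in[where a=False] vc_diff_in[where a=False] in auto)
  then show ?thesis by simp
qed

lemma vc_lin: "lin (vc a)"
proof (rule linI)
  fix x y
  have "x + y - (vc a x + vc a y) = (x - vc a x) + (y - vc a y)" by (simp add: algebra_simps)
  then show "vc a (x + y) = vc a x + vc a y"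
    by (metis vc_unique Vd_add vc_in vc_diff_in)
next
  fix c x
  have "scale c x - scale c (vc a x) = scale c (x - vc a x)" by (simp add: scale_right_diff_distrib)
  then show "vc a (scale c x) = scale c (vc a x)"
    by (metis vc_unique Vd_scale vc_in vc_diff_in)
qed

lemma vc_zero [simp]: "vc a 0 = 0"
  by (simp add: vc_hom)

lemma lin_split: "lin f \<Longrightarrow> f (vc False v) + f (vc True v) = f v"
  by (metis endo.linear_add vc_sum)

lemma gc_eq: "gc a A v = vc a (A (vc False v)) + vc (\<not> a) (A (vc True v))"
  by (simp add: gcomp_def UNIV_bool)

lemma gc_lin: "lin A \<Longrightarrow> lin (gc a A)"
  unfolding gc_eq[abs_def]
  by (intro endo.linear_compose_add lin_comp[OF vc_lin] lin_comp[OF _ vc_lin])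

lemma gl_deg_apply: "f \<in> gl a \<Longrightarrow> x \<in> Vd b \<Longrightarrow> f x \<in> Vd (a \<noteq> b)"
  unfolding gl_deg_def by blast

lemma gc_hom:
  assumes "A \<in> gl b"
  shows "gc a A = (if a = b then A else (\<lambda>v. 0))"
proof -
  have lA: "lin A" using assms by (simp add: gl_deg_def glV_def)
  have 1: "A (vc False v) \<in> Vd b" and 2: "A (vc True v) \<in> Vd (\<not> b)" for v
    using gl_deg_apply[OF assms vc_in[where a=False]] gl_deg_apply[OF assms vc_in[where a=True]]
    by simp_all
  have "gc a A v = (if a = b then A v else 0)" for v
    using 1[of v] 2[of v] lin_split[OF lA, of v]
    by (cases a; cases b) (simp_all add: gc_eq vc_same vc_other)
  then show ?thesis by auto
qed

lemma gc_gl: "lin A \<Longrightarrow> gc a A \<in> gl a"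
  unfolding gl_deg_def glV_def
  using gc_lin vc_in by (auto simp: gc_eq vc_hom endo.linear_0 intro!: Vd_add)

lemma gc_sum:
  assumes "lin A"
  shows "gc False A v + gc True A v = A v"
proof -
  have "gc False A v + gc True A v
      = (vc False (A (vc False v)) + vc True (A (vc False v)))
      + (vc False (A (vc True v)) + vc True (A (vc True v)))"
    by (simp add: gc_eq algebra_simps)
  also have "\<dots> = A v" by (simp add: vc_sum lin_split[OF assms])
  finally show ?thesis .
qed

lemma ssign_commute: "ssign a b = ssign b a"
  and ssign_square: "ssign a b * ssign a b = (1::'k)"
  and ssign_nonzero: "ssign a b \<noteq> (0::'k)"
  by (auto simp: ssign_def)

lemma Epair_eq:
  assumes "lin A"
  shows "pairing (A, x) (B, y)
    = scale (1/2) (A y + (\<Sum>a\<in>UNIV. \<Sum>d\<in>UNIV. scale (ssign a d) (gc d B (vc a x))))"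
proof -
  have "(\<Sum>a\<in>UNIV. \<Sum>d\<in>UNIV. gc a A (vc d y)) = A y"
    using lin_split[OF gc_lin[OF assms]] gc_sum[OF assms] by (simp add: UNIV_bool algebra_simps)
  then show ?thesis
    by (simp add: Epair_def Ecomp_def sum.distrib)
qed

lemma Epair_homogeneous_right:
  assumes "lin A" and "B \<in> gl b" and "y \<in> Vd b"
  shows "pairing (A, x) (B, y) = scale (1/2) (A y + (\<Sum>a\<in>UNIV. scale (ssign a b) (B (vc a x))))"
proof -
  have "(\<Sum>d\<in>UNIV. scale (ssign a d) (gc d B z)) = scale (ssign a b) (B z)" for a z
    unfolding gc_hom[OF assms(2)] by (cases b) (simp_all add: UNIV_bool)
  then show ?thesis by (simp add: Epair_eq[OF assms(1)])
qed

lemma Epair_zero_left: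
  assumes "lin A" and "lin B"
  shows "pairing (A, 0) (B, y) = scale (1/2) (A y)"
  using endo.linear_0[OF gc_lin[OF assms(2)]] by (simp add: Epair_eq[OF assms(1)])

lemma Epair_split_right:
  assumes "lin A" and "lin B"
  shows "pairing (A, x) (B, y)
    = pairing (A, x) (Ecomp V0 V1 False (B, y)) + pairing (A, x) (Ecomp V0 V1 True (B, y))"
proof -
  define f where "f = (\<lambda>a d. scale (ssign a d) (gc d B (vc a x)))"
  have "pairing (A, x) (B, y)
      = scale (1/2) (A (vc False y) + (\<Sum>a\<in>UNIV. f a False))
      + scale (1/2) (A (vc True y) + (\<Sum>a\<in>UNIV. f a True))"
    by (simp add: Epair_eq[OF assms(1)] f_def UNIV_bool lin_split[OF assms(1)]
        flip: scale_right_distrib add.assoc)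
  also have "\<dots> = pairing (A, x) (Ecomp V0 V1 False (B, y)) + pairing (A, x) (Ecomp V0 V1 True (B, y))"
    by (simp add: Ecomp_def Epair_homogeneous_right[OF assms(1) gc_gl[OF assms(2)] vc_in]
        f_def gc_hom[OF gc_gl[OF assms(2)]])
  finally show ?thesis .
qed

lemma projection_exists:
  assumes "subspace S"
  obtains p where "lin p" "\<And>v. p v \<in> S" "\<And>s. s \<in> S \<Longrightarrow> p s = s"
proof -
  obtain g where "g ` UNIV \<subseteq> S" "lin g" "\<forall>v\<in>S. g (id v) = v"
    using endo.linear_exists_left_inverse_on[OF linear_id assms inj_on_id] by blast
  then show ?thesis by (intro that[of g]) auto
qed

lemma graded_projection_exists:
  assumes "graded_subspace_V scale V0 V1 W"
  obtains p where "lin p" "\<And>v. p v \<in> W" "\<And>w. w \<in> W \<Longrightarrow> p w = w" "\<And>a v. v \<in> Vd a \<Longrightarrow> p v \<in> Vd a"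
proof -
  have W: "subspace W" "\<And>w a. w \<in> W \<Longrightarrow> vc a w \<in> W"
    using assms by (auto simp: graded_subspace_V_def)
  have "\<exists>q. lin q \<and> (\<forall>v. q v \<in> W \<inter> Vd a) \<and> (\<forall>s\<in>W \<inter> Vd a. q s = s)" for a
    by (rule projection_exists[OF subspace_inter[OF W(1) subspace_Vd]]) blast
  then obtain q where q: "\<And>a. lin (q a)" "\<And>a v. q a v \<in> W \<inter> Vd a" "\<And>a s. s \<in> W \<inter> Vd a \<Longrightarrow> q a s = s"
    by metis
  define p where "p v = q False (vc False v) + q True (vc True v)" for v
  show ?thesis
  proof
    show "lin p" unfolding p_def[abs_def] by (intro endo.linear_compose_add lin_comp[OF q(1) vc_lin])
    show "p v \<in> W" for v unfolding p_def using q(2) subspace_add[OF W(1)] by blast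
    show "p w = w" if "w \<in> W" for w
    proof -
      have "q a (vc a w) = vc a w" for a using q(3) W(2)[OF that] vc_in by blast
      then show ?thesis by (simp add: p_def vc_sum)
    qed
    show "p v \<in> Vd a" if "v \<in> Vd a" for a v
    proof -
      have "p v = q a v"
        using that unfolding p_def by (cases a) (simp_all add: vc_same vc_other endo.linear_0[OF q(1)])
      then show ?thesis using q(2) by auto
    qed
  qed
qed

lemma ann_V_ann_gl: assumes "subspace W" shows "ann_V (ann_gl scale W) = W"
proof
  show "ann_V (ann_gl scale W) \<subseteq> W"
  proof
    fix x assume x: "x \<in> ann_V (ann_gl scale W)"
    obtain p where p: "lin p" "\<And>v. p v \<in> W" "\<And>w. w \<in> W \<Longrightarrow> p w = w"
      using projection_exists[OF assms] by blast
    have "(\<lambda>v. v - p v) \<in> ann_gl scale W"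
      using p endo.linear_compose_sub[OF linear_ident p(1)] by (simp add: ann_gl_def glV_def)
    then have "x - p x = 0" using x by (auto simp: ann_V_def)
    then show "x \<in> W" using p(2) by (metis eq_iff_diff_eq_0)
  qed
qed (auto simp: ann_V_def ann_gl_def)

subsection \<open>Graphs of skew maps are maximal isotropic\<close>

context
  fixes W :: "'v set" and \<pi> :: "'v \<Rightarrow> 'v \<Rightarrow> 'v" and L :: "(('v \<Rightarrow> 'v) \<times> 'v) set"
  assumes W_graded: "graded_subspace_V scale V0 V1 W"
    and \<pi>_even_skew: "even_skew_map scale V0 V1 \<pi>"
    and L_graph: "L = {((\<lambda>v. X v + \<pi> x v), x) | X x. X \<in> ann_gl scale W \<and> x \<in> W}"
begin

lemma subspace_W: "subspace W"
  and vc_W: "w \<in> W \<Longrightarrow> vc a w \<in> W"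
  using W_graded by (simp_all add: graded_subspace_V_def)

lemma \<pi>_lin: "lin (\<pi> x)"
  and \<pi>_gl: "x \<in> Vd a \<Longrightarrow> \<pi> x \<in> gl a"
  and \<pi>_skew: "x \<in> Vd a \<Longrightarrow> y \<in> Vd b \<Longrightarrow> \<pi> x y = - scale (ssign a b) (\<pi> y x)"
  using \<pi>_even_skew unfolding even_skew_map_def glV_def by blast+

lemma \<pi>_add: "\<pi> (x + y) v = \<pi> x v + \<pi> y v"
proof -
  have "\<pi> (scale 1 x + y) = (\<lambda>v. scale 1 (\<pi> x v) + \<pi> y v)"
    using \<pi>_even_skew unfolding even_skew_map_def by blast
  then show ?thesis by simp
qed

lemma \<pi>_zero: "\<pi> 0 v = 0"
  using \<pi>_add[of 0 0 v] by simp

lemma \<pi>_split: "\<pi> (vc False x) v + \<pi> (vc True x) v = \<pi> x v"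
  by (simp add: vc_sum flip: \<pi>_add)

lemma \<pi>_skew_scaled:
  assumes "x \<in> Vd a" and "y \<in> Vd b"
  shows "scale (ssign a b) (\<pi> y x) = - \<pi> x y"
proof -
  have "scale (ssign a b) (\<pi> y x) = - scale (ssign a b * ssign b a) (\<pi> x y)"
    by (simp add: \<pi>_skew[OF assms(2,1)] scale_minus_right)
  then show ?thesis by (simp add: ssign_commute[of b a] ssign_square)
qed

lemma mem_graph_iff: "(A, x) \<in> L \<longleftrightarrow> x \<in> W \<and> (\<lambda>v. A v - \<pi> x v) \<in> ann_gl scale W"
proof
  assume "(A, x) \<in> L"
  then obtain X where "X \<in> ann_gl scale W" "x \<in> W" "A = (\<lambda>v. X v + \<pi> x v)"
    unfolding L_graph by blast
  then show "x \<in> W \<and> (\<lambda>v. A v - \<pi> x v) \<in> ann_gl scale W" by simp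
next
  assume "x \<in> W \<and> (\<lambda>v. A v - \<pi> x v) \<in> ann_gl scale W"
  then show "(A, x) \<in> L"
    unfolding L_graph by (intro CollectI exI[of _ "\<lambda>v. A v - \<pi> x v"] exI[of _ x]) simp
qed

lemma ann_gl_in_graph: "X \<in> ann_gl scale W \<Longrightarrow> (X, 0) \<in> L"
  by (simp add: mem_graph_iff subspace_0[OF subspace_W] \<pi>_zero)

lemma \<pi>_in_graph: "w \<in> W \<Longrightarrow> (\<pi> w, w) \<in> L"
  by (simp add: mem_graph_iff ann_gl_def glV_def endo.linear_zero)

lemma graph_fst_on_W: "(A, x) \<in> L \<Longrightarrow> w \<in> W \<Longrightarrow> A w = \<pi> x w"
  unfolding mem_graph_iff ann_gl_def by auto

lemma graph_isotropic_homogeneous: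
  assumes "(A, x) \<in> L" and "(B, y) \<in> L" and "B \<in> gl b" and "y \<in> Vd b" and "lin A"
  shows "pairing (A, x) (B, y) = 0"
proof -
  have "x \<in> W" "y \<in> W" using assms(1,2) mem_graph_iff by auto
  then have "A y = \<pi> x y" and "B (vc a x) = \<pi> y (vc a x)" for a
    using graph_fst_on_W assms(1,2) vc_W by auto
  then show ?thesis
    using \<pi>_split[of x y] \<pi>_skew_scaled[OF vc_in assms(4)]
    by (simp add: Epair_homogeneous_right[OF assms(5,3,4)] UNIV_bool algebra_simps)
qed

lemma graph_isotropic:
  assumes "graded_subspace_E scale V0 V1 L"
  shows "L \<subseteq> perp L"
proof
  have L_lin: "(B, y) \<in> L \<Longrightarrow> lin B" for B y
    using assms by (auto simp: graded_subspace_E_def Espace_def glV_def)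
  have L_comp: "(B, y) \<in> L \<Longrightarrow> (gc a B, vc a y) \<in> L" for B y a
    using assms unfolding graded_subspace_E_def Ecomp_def by fastforce
  fix e assume "e \<in> L"
  then obtain A x where e: "e = (A, x)" "(A, x) \<in> L" by (cases e) auto
  have "pairing (A, x) (B, y) = 0" if f: "(B, y) \<in> L" for B y
  proof -
    have "pairing (A, x) (gc a B, vc a y) = 0" for a
      by (rule graph_isotropic_homogeneous[OF e(2) L_comp[OF f] gc_gl[OF L_lin[OF f]] vc_in L_lin[OF e(2)]])
    then show ?thesis
      by (simp add: Epair_split_right[OF L_lin[OF e(2)] L_lin[OF f]] Ecomp_def)
  qed
  moreover have "e \<in> Espace scale" using L_lin e by (simp add: Espace_def glV_def)
  ultimately show "e \<in> perp L" using e by (auto simp: Eperp_def)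
qed

context
  fixes A x
  assumes A_lin: "lin A"
    and perp_L: "\<And>f. f \<in> L \<Longrightarrow> pairing (A, x) f = 0"
begin

text \<open>Pairing with \<open>(gc b X, 0)\<close> gives \<open>\<plusminus>gc b X (vc False x) \<plusminus> gc b X (vc True x) = 0\<close>,
  a sum of two terms of opposite degree, so both vanish.\<close>
lemma perp_graph_snd_in_W: "x \<in> W"
proof -
  have "X x = 0" if X: "X \<in> ann_gl scale W" for X
  proof -
    have XL: "lin X" using X by (simp add: ann_gl_def glV_def)
    have "gc b X \<in> ann_gl scale W" for b
      using gc_lin[OF XL] X vc_W by (simp add: ann_gl_def glV_def gc_eq)
    then have "pairing (A, x) (gc b X, 0) = 0" for b using perp_L ann_gl_in_graph by blast
    then have "scale (ssign False b) (gc b X (vc False x)) + scale (ssign True b) (gc b X (vc True x)) = 0" for b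
      by (simp add: Epair_homogeneous_right[OF A_lin gc_gl[OF XL]] UNIV_bool endo.linear_0[OF A_lin])
    moreover have "scale (ssign False b) (gc b X (vc False x)) \<in> Vd b"
      and "scale (ssign True b) (gc b X (vc True x)) \<in> Vd (\<not> b)" for b
      using Vd_scale[OF gl_deg_apply[OF gc_gl[OF XL] vc_in[where a=False]]]
        Vd_scale[OF gl_deg_apply[OF gc_gl[OF XL] vc_in[where a=True]]] by simp_all
    ultimately have "gc b X (vc a x) = 0" for a b
      using Vd_add_eq_zero_iff ssign_nonzero by (cases a) fastforce+
    then have "gc b X x = 0" for b
      using lin_split[OF gc_lin[OF XL]] by (metis add.right_neutral)
    then show ?thesis using gc_sum[OF XL] by (metis add.right_neutral)
  qed
  then have "x \<in> ann_V (ann_gl scale W)" by (simp add: ann_V_def)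
  then show ?thesis using ann_V_ann_gl[OF subspace_W] by simp
qed

lemma perp_graph_fst_on_W:
  assumes "w \<in> W"
  shows "A w = \<pi> x w"
proof -
  have homogeneous: "A u = \<pi> x u" if u: "u \<in> W" "u \<in> Vd b" for u b
  proof -
    have "pairing (A, x) (\<pi> u, u) = 0" using perp_L \<pi>_in_graph[OF u(1)] by blast
    then have "A u + (\<Sum>a\<in>UNIV. scale (ssign a b) (\<pi> u (vc a x))) = 0"
      by (simp add: Epair_homogeneous_right[OF A_lin \<pi>_gl[OF u(2)] u(2)])
    then show ?thesis
      using \<pi>_skew_scaled[OF vc_in u(2)] \<pi>_split[of x u] by (simp add: UNIV_bool algebra_simps)
  qed
  show ?thesis
    using homogeneous[OF vc_W[OF assms] vc_in] lin_split[OF A_lin, of w] lin_split[OF \<pi>_lin, of x w]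
    by simp
qed

end

lemma graph_perp_subset: "perp L \<subseteq> L"
proof
  fix e assume e: "e \<in> perp L"
  obtain A x where ex: "e = (A, x)" by (cases e)
  have A: "lin A" and "\<And>f. f \<in> L \<Longrightarrow> pairing (A, x) f = 0"
    using e ex by (auto simp: Eperp_def Espace_def glV_def)
  then have "x \<in> W" and "\<And>w. w \<in> W \<Longrightarrow> A w = \<pi> x w"
    using perp_graph_snd_in_W perp_graph_fst_on_W by blast+
  then show "e \<in> L"
    using endo.linear_compose_sub[OF A \<pi>_lin] by (simp add: ex mem_graph_iff ann_gl_def glV_def)
qed

lemma graph_maximal_isotropic: "graded_subspace_E scale V0 V1 L \<Longrightarrow> L = perp L"
  using graph_isotropic graph_perp_subset by blast

lemma graph_inter_gl_eq_ann: "{X. (X, 0) \<in> L} = ann_gl scale W"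
  using mem_graph_iff[of _ 0] subspace_0[OF subspace_W] by (auto simp: \<pi>_zero)

lemma W_eq_ann_V_graph_inter_gl: "W = ann_V {X. (X, 0) \<in> L}"
  by (simp add: graph_inter_gl_eq_ann ann_V_ann_gl[OF subspace_W])

end

subsection \<open>Maximal isotropic subspaces are graphs of skew maps\<close>

context
  fixes L :: "(('v \<Rightarrow> 'v) \<times> 'v) set"
  assumes L_graded: "graded_subspace_E scale V0 V1 L"
    and L_maximal: "L = perp L"
begin

lemma lagrangian_fst_lin: "(B, w) \<in> L \<Longrightarrow> lin B"
  using L_graded by (auto simp: graded_subspace_E_def Espace_def glV_def)

lemma lagrangian_zero: "((\<lambda>v. 0), 0) \<in> L"
  using L_graded by (simp add: graded_subspace_E_def)

lemma lagrangian_lincomb: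
  assumes "(B, w) \<in> L" and "(C, u) \<in> L"
  shows "((\<lambda>v. scale c (B v) + C v), scale c w + u) \<in> L"
proof -
  have "Escale scale c (B, w) \<in> L" using L_graded assms(1) by (simp add: graded_subspace_E_def)
  then have "((\<lambda>v. scale c (B v)), scale c w) \<in> L" by (simp add: Escale_def)
  then show ?thesis using L_graded assms(2) unfolding graded_subspace_E_def by fastforce
qed

lemma lagrangian_diff: "(B, w) \<in> L \<Longrightarrow> (C, u) \<in> L \<Longrightarrow> ((\<lambda>v. B v - C v), w - u) \<in> L"
  using lagrangian_lincomb[of C u B w "-1"] by (simp add: scale_minus_left)

lemma lagrangian_comp: "(B, w) \<in> L \<Longrightarrow> (gc a B, vc a w) \<in> L"
  using L_graded unfolding graded_subspace_E_def Ecomp_def by fastforce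

lemma lagrangian_isotropic: "e \<in> L \<Longrightarrow> f \<in> L \<Longrightarrow> pairing e f = 0"
  using L_maximal unfolding Eperp_def by blast

lemma lagrangian_fst_vanishes:
  assumes "(B, 0) \<in> L" and "u \<in> snd ` L"
  shows "B u = 0"
proof -
  obtain C where C: "(C, u) \<in> L" using assms(2) by force
  have "pairing (B, 0) (C, u) = 0" by (rule lagrangian_isotropic[OF assms(1) C])
  then show ?thesis
    by (simp add: Epair_zero_left[OF lagrangian_fst_lin[OF assms(1)] lagrangian_fst_lin[OF C]])
qed

lemma lagrangian_fst_determined:
  assumes "(B, w) \<in> L" and "(C, w) \<in> L" and "u \<in> snd ` L"
  shows "B u = C u"
proof -
  have "((\<lambda>v. B v - C v), 0) \<in> L" using lagrangian_diff[OF assms(1,2)] by simp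
  from lagrangian_fst_vanishes[OF this assms(3)] show ?thesis by simp
qed

lemma lagrangian_snd_graded: "graded_subspace_V scale V0 V1 (snd ` L)"
  unfolding graded_subspace_V_def subspace_def
proof (intro conjI ballI allI)
  show "0 \<in> snd ` L" using lagrangian_zero by force
next
  fix x y assume "x \<in> snd ` L" "y \<in> snd ` L"
  then obtain B C where "(B, x) \<in> L" "(C, y) \<in> L" by force
  from lagrangian_lincomb[OF this, of 1] show "x + y \<in> snd ` L" by force
next
  fix c x assume "x \<in> snd ` L"
  then obtain B where "(B, x) \<in> L" by force
  from lagrangian_lincomb[OF this lagrangian_zero, of c] show "scale c x \<in> snd ` L" by force
next
  fix w a assume "w \<in> snd ` L"
  then obtain B where "(B, w) \<in> L" by force
  from lagrangian_comp[OF this, of a] show "vc a w \<in> snd ` L" by force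
qed

text \<open>\<open>B w\<close> is an arbitrary first component over \<open>w\<close>; it is determined only on \<open>snd ` L\<close>,
  which is why \<open>\<pi>\<close> reads it there through the even projection \<open>p\<close>.\<close>
context
  fixes p :: "'v \<Rightarrow> 'v" and B \<pi> :: "'v \<Rightarrow> 'v \<Rightarrow> 'v"
  assumes p_lin: "lin p" and p_range: "\<And>v. p v \<in> snd ` L"
    and p_id: "\<And>w. w \<in> snd ` L \<Longrightarrow> p w = w" and p_even: "\<And>a v. v \<in> Vd a \<Longrightarrow> p v \<in> Vd a"
    and B_mem: "\<And>w. w \<in> snd ` L \<Longrightarrow> (B w, w) \<in> L"
    and \<pi>_eq: "\<And>x v. \<pi> x v = B (p x) (p v)"
begin

lemma B_p_mem: "(B (p x), p x) \<in> L"
  by (rule B_mem[OF p_range])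

lemma lagrangian_\<pi>_lin: "lin (\<pi> x)"
  using lin_comp[OF lagrangian_fst_lin[OF B_p_mem] p_lin] by (simp add: \<pi>_eq[abs_def])

lemma lagrangian_\<pi>_homogeneous:
  assumes "x \<in> Vd a"
  shows "(gc a (B (p x)), p x) \<in> L" and "\<pi> x v = gc a (B (p x)) (p v)"
proof -
  show "(gc a (B (p x)), p x) \<in> L"
    using lagrangian_comp[OF B_p_mem, of a x] vc_same[OF p_even[OF assms]] by simp
  then show "\<pi> x v = gc a (B (p x)) (p v)"
    using lagrangian_fst_determined[OF B_p_mem _ p_range] by (simp add: \<pi>_eq)
qed

lemma lagrangian_\<pi>_lincomb: "\<pi> (scale c x + y) = (\<lambda>v. scale c (\<pi> x v) + \<pi> y v)"
proof -
  have "((\<lambda>v. scale c (B (p x) v) + B (p y) v), p (scale c x + y)) \<in> L"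
    using lagrangian_lincomb[OF B_p_mem B_p_mem] by (simp add: endo.linear_add endo.linear_scale p_lin)
  from lagrangian_fst_determined[OF B_p_mem this p_range] show ?thesis
    by (simp add: \<pi>_eq fun_eq_iff)
qed

lemma lagrangian_\<pi>_gl: "x \<in> Vd a \<Longrightarrow> \<pi> x \<in> gl a"
  using lagrangian_\<pi>_lin gl_deg_apply[OF gc_gl[OF lagrangian_fst_lin[OF B_p_mem]] p_even]
  by (simp add: gl_deg_def glV_def lagrangian_\<pi>_homogeneous(2))

text \<open>Pair the homogeneous elements \<open>(gc a (B (p x)), p x)\<close> and \<open>(gc b (B (p y)), p y)\<close> of \<open>L\<close>.\<close>
lemma lagrangian_\<pi>_skew:
  assumes x: "x \<in> Vd a" and y: "y \<in> Vd b"
  shows "\<pi> x y = - scale (ssign a b) (\<pi> y x)"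
proof -
  define G1 where "G1 = gc a (B (p x))"
  define G2 where "G2 = gc b (B (p y))"
  have G1: "lin G1" and G2: "G2 \<in> gl b" "lin G2"
    unfolding G1_def G2_def using gc_lin gc_gl lagrangian_fst_lin[OF B_p_mem] by blast+
  have "pairing (G1, p x) (G2, p y) = 0"
    unfolding G1_def G2_def by (intro lagrangian_isotropic lagrangian_\<pi>_homogeneous(1) x y)
  then have "G1 (p y) + (\<Sum>c\<in>UNIV. scale (ssign c b) (G2 (vc c (p x)))) = 0"
    by (simp add: Epair_homogeneous_right[OF G1 G2(1) p_even[OF y]])
  moreover have "(\<Sum>c\<in>UNIV. scale (ssign c b) (G2 (vc c (p x)))) = scale (ssign a b) (G2 (p x))"
    using vc_hom[OF p_even[OF x]] endo.linear_0[OF G2(2)] by (cases a) (simp_all add: UNIV_bool)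
  moreover have "G1 (p y) = \<pi> x y" by (simp add: G1_def lagrangian_\<pi>_homogeneous(2)[OF x])
  moreover have "G2 (p x) = \<pi> y x" by (simp add: G2_def lagrangian_\<pi>_homogeneous(2)[OF y])
  ultimately show ?thesis by (simp add: eq_neg_iff_add_eq_0)
qed

lemma even_skew_map_lagrangian_\<pi>: "even_skew_map scale V0 V1 \<pi>"
  unfolding even_skew_map_def glV_def
  using lagrangian_\<pi>_lin lagrangian_\<pi>_lincomb lagrangian_\<pi>_gl lagrangian_\<pi>_skew by blast

lemma lagrangian_subset_graph:
  "L \<subseteq> {((\<lambda>v. X v + \<pi> x v), x) | X x. X \<in> ann_gl scale (snd ` L) \<and> x \<in> snd ` L}"
proof
  fix e assume e: "e \<in> L"
  then obtain C w where ew: "e = (C, w)" "(C, w) \<in> L" by (cases e) auto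
  have w: "w \<in> snd ` L" using ew by force
  have "C u - \<pi> w u = 0" if "u \<in> snd ` L" for u
    using lagrangian_fst_determined[OF ew(2) B_mem[OF w] that] by (simp add: \<pi>_eq p_id w that)
  then have "(\<lambda>v. C v - \<pi> w v) \<in> ann_gl scale (snd ` L)"
    using endo.linear_compose_sub[OF lagrangian_fst_lin[OF ew(2)] lagrangian_\<pi>_lin]
    by (simp add: ann_gl_def glV_def)
  then show "e \<in> {((\<lambda>v. X v + \<pi> x v), x) | X x. X \<in> ann_gl scale (snd ` L) \<and> x \<in> snd ` L}"
    using w by (auto simp: ew intro!: exI[of _ "\<lambda>v. C v - \<pi> w v"])
qed

text \<open>By maximality: \<open>X + \<pi> x - B x\<close> kills \<open>snd ` L\<close>, hence is orthogonal to \<open>L\<close>, hence lies in \<open>L\<close>.\<close>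
lemma graph_subset_lagrangian:
  assumes X: "X \<in> ann_gl scale (snd ` L)" and x: "x \<in> snd ` L"
  shows "((\<lambda>v. X v + \<pi> x v), x) \<in> L"
proof -
  define Y where "Y v = X v + \<pi> x v - B x v" for v
  have Y: "lin Y"
    using endo.linear_compose_sub[OF endo.linear_compose_add lagrangian_fst_lin[OF B_mem[OF x]]]
      X lagrangian_\<pi>_lin by (simp add: Y_def[abs_def] ann_gl_def glV_def)
  have "pairing (Y, 0) f = 0" if f: "f \<in> L" for f
  proof -
    obtain C u where fu: "f = (C, u)" "(C, u) \<in> L" using f by (cases f) auto
    then have u: "u \<in> snd ` L" by force
    then have "X u = 0" using X unfolding ann_gl_def by blast
    then have "Y u = 0" by (simp add: Y_def \<pi>_eq p_id u x)
    then show ?thesis by (simp add: fu Epair_zero_left[OF Y lagrangian_fst_lin[OF fu(2)]])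
  qed
  then have "(Y, 0) \<in> L"
    using Y L_maximal by (auto simp: Eperp_def Espace_def glV_def)
  from lagrangian_lincomb[OF this B_mem[OF x], of 1] show ?thesis
    by (simp add: Y_def)
qed

lemma lagrangian_eq_graph:
  "L = {((\<lambda>v. X v + \<pi> x v), x) | X x. X \<in> ann_gl scale (snd ` L) \<and> x \<in> snd ` L}"
  using lagrangian_subset_graph graph_subset_lagrangian by blast

end

lemma lagrangian_is_graph:
  "\<exists>W \<pi>. graded_subspace_V scale V0 V1 W \<and> even_skew_map scale V0 V1 \<pi> \<and>
     L = {((\<lambda>v. X v + \<pi> x v), x) | X x. X \<in> ann_gl scale W \<and> x \<in> W}"
proof -
  obtain p where p: "lin p" "\<And>v. p v \<in> snd ` L" "\<And>w. w \<in> snd ` L \<Longrightarrow> p w = w"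
    "\<And>a v. v \<in> Vd a \<Longrightarrow> p v \<in> Vd a"
    using graded_projection_exists[OF lagrangian_snd_graded] by blast
  have "\<forall>w\<in>snd ` L. \<exists>C. (C, w) \<in> L" by force
  from bchoice[OF this] obtain B where B: "\<forall>w\<in>snd ` L. (B w, w) \<in> L" ..
  define \<pi> where "\<pi> x v = B (p x) (p v)" for x v
  show ?thesis
    by (intro exI[of _ "snd ` L"] exI[of _ \<pi>] conjI lagrangian_snd_graded even_skew_map_lagrangian_\<pi>[OF p B[rule_format] \<pi>_def]
        lagrangian_eq_graph[OF p B[rule_format] \<pi>_def])
qed

end

end

theorem mainTheorem4:
  fixes scale :: "'k::field_char_0 \<Rightarrow> 'v::ab_group_add \<Rightarrow> 'v"
    and V0 V1 :: "'v set"
    and L :: "(('v \<Rightarrow> 'v) \<times> 'v) set"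
  assumes "super_vs scale V0 V1"
    and "fin_dim scale"
    and "graded_subspace_E scale V0 V1 L"
  shows "(L = Eperp scale V0 V1 L \<longleftrightarrow>
           (\<exists>W \<pi>. graded_subspace_V scale V0 V1 W \<and> even_skew_map scale V0 V1 \<pi> \<and>
              L = {((\<lambda>v. X v + \<pi> x v), x) | X x. X \<in> ann_gl scale W \<and> x \<in> W}))
       \<and> (\<forall>W \<pi>. L = Eperp scale V0 V1 L \<and> graded_subspace_V scale V0 V1 W \<and> even_skew_map scale V0 V1 \<pi> \<and>
              L = {((\<lambda>v. X v + \<pi> x v), x) | X x. X \<in> ann_gl scale W \<and> x \<in> W}
            \<longrightarrow> {X. (X, 0) \<in> L} = ann_gl scale W
              \<and> W = ann_V {X. (X, 0) \<in> L})"
proof -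
  interpret super_vector_space scale V0 V1
    using assms(1) by (simp add: super_vs_def super_vector_space_def super_vector_space_axioms_def)
  show ?thesis
  proof (intro conjI iffI allI impI)
    assume "L = Eperp scale V0 V1 L"
    then show "\<exists>W \<pi>. graded_subspace_V scale V0 V1 W \<and> even_skew_map scale V0 V1 \<pi> \<and>
        L = {((\<lambda>v. X v + \<pi> x v), x) | X x. X \<in> ann_gl scale W \<and> x \<in> W}"
      by (rule lagrangian_is_graph[OF assms(3)])
  next
    assume "\<exists>W \<pi>. graded_subspace_V scale V0 V1 W \<and> even_skew_map scale V0 V1 \<pi> \<and>
        L = {((\<lambda>v. X v + \<pi> x v), x) | X x. X \<in> ann_gl scale W \<and> x \<in> W}"
    then obtain W \<pi> where "graded_subspace_V scale V0 V1 W" "even_skew_map scale V0 V1 \<pi>"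
        "L = {((\<lambda>v. X v + \<pi> x v), x) | X x. X \<in> ann_gl scale W \<and> x \<in> W}"
      by blast
    then show "L = Eperp scale V0 V1 L" by (rule graph_maximal_isotropic[OF _ _ _ assms(3)])
  next
    fix W \<pi>
    assume "L = Eperp scale V0 V1 L \<and> graded_subspace_V scale V0 V1 W \<and> even_skew_map scale V0 V1 \<pi> \<and>
        L = {((\<lambda>v. X v + \<pi> x v), x) | X x. X \<in> ann_gl scale W \<and> x \<in> W}"
    then show "{X. (X, 0) \<in> L} = ann_gl scale W" and "W = ann_V {X. (X, 0) \<in> L}"
      using graph_inter_gl_eq_ann W_eq_ann_V_graph_inter_gl by meson+
  qed
qed

end
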